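(* Let $f\in\mathrm{Dom}_+(\Gamma)$ be a strictly positive bounded function and $b=\sup_{x\in\mathbb X}f(x)$. Assume there exists an increasing (not necessarily strictly) function $g:(0,\infty)\to(0,\infty)$ with $\int_0^b\frac{dy}{g(y)}<\infty$. If $\Gamma f(x)\le-g(f(x))$ for all $x\in\mathbb X$, then $\mathbb E_x\zeta<\infty$ for all $x\in\mathbb X$.
   Context: Let $\mathbb X$ be a countably infinite set and $\Gamma=(\Gamma_{xy})_{x,y\in\mathbb X}$ a matrix with $\Gamma_{xy}\ge0$ for $y\ne x$, $\gamma_x:=\sum_{y\ne x}\Gamma_{xy}$, $\Gamma_{xx}=-\gamma_x$, and $0<\gamma_x<\infty$ for all $x$. Let $P_{xy}=\Gamma_{xy}/\gamma_x$ for $y\neq x$ and $P_{xx}=0$; the discrete-time chain $(\tilde\xi_n)$ with transition matrix $P$ (embedded jump chain) is assumed irreducible. The continuous-time Markov chain $(\xi_t)_{t\ge0}$ with generator $\Gamma$: conditionally on $\tilde\xi$, holding times $\sigma_n$ ($n\ge1$) are independent exponential with parameter $\gamma_{\tilde\xi_{n-1}}$; $J_0=0$, $J_n=\sigma_1+\dots+\sigma_n$; explosion time $\zeta=\lim_n J_n$; $\xi_t=\tilde\xi_n$ on $[J_n,J_{n+1})$ and $\xi_t=\partial$ (cemetery) for $t\ge\zeta$. $\mathbb E_x$ refers to $\xi_0=x$. $\mathrm{Dom}(\Gamma)=\{f:\mathbb X\to\mathbb R:\ \sum_{y\ne x}\Gamma_{xy}|f(y)|<\infty\ \forall x\}$,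 $\mathrm{Dom}_+(\Gamma)$ its non-negative elements, $\Gamma f(x)=\sum_{y}\Gamma_{xy}f(y)$. *)

theory Defs
  imports "HOL-Probability.Probability"
begin

definition rate :: "('x \<Rightarrow> 'x \<Rightarrow> real) \<Rightarrow> 'x \<Rightarrow> real" where
  "rate \<Gamma> x = (\<Sum>\<^sub>\<infinity> y \<in> UNIV - {x}. \<Gamma> x y)"

definition qmatrix :: "('x \<Rightarrow> 'x \<Rightarrow> real) \<Rightarrow> bool" where
  "qmatrix \<Gamma> \<longleftrightarrow>
     (\<forall>x y. y \<noteq> x \<longrightarrow> \<Gamma> x y \<ge> 0) \<and>
     (\<forall>x. (\<Gamma> x) summable_on (UNIV - {x})) \<and>
     (\<forall>x. \<Gamma> x x = - rate \<Gamma> x) \<and>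
     (\<forall>x. 0 < rate \<Gamma> x)"

definition jumpP :: "('x \<Rightarrow> 'x \<Rightarrow> real) \<Rightarrow> 'x \<Rightarrow> 'x \<Rightarrow> real" where
  "jumpP \<Gamma> x y = (if y = x then 0 else \<Gamma> x y / rate \<Gamma> x)"

definition jump_irreducible :: "('x \<Rightarrow> 'x \<Rightarrow> real) \<Rightarrow> bool" where
  "jump_irreducible \<Gamma> \<longleftrightarrow>
     (\<forall>x y. \<exists>xs. xs \<noteq> [] \<and> hd xs = x \<and> last xs = y \<and>
        (\<forall>i. Suc i < length xs \<longrightarrow> jumpP \<Gamma> (xs ! i) (xs ! Suc i) > 0))"

definition in_Dom :: "('x \<Rightarrow> 'x \<Rightarrow> real) \<Rightarrow> ('x \<Rightarrow> real) \<Rightarrow> bool" where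
  "in_Dom \<Gamma> f \<longleftrightarrow> (\<forall>x. (\<lambda>y. \<Gamma> x y * \<bar>f y\<bar>) summable_on (UNIV - {x}))"

definition gen_apply :: "('x \<Rightarrow> 'x \<Rightarrow> real) \<Rightarrow> ('x \<Rightarrow> real) \<Rightarrow> 'x \<Rightarrow> real" where
  "gen_apply \<Gamma> f x = (\<Sum>\<^sub>\<infinity> y. \<Gamma> x y * f y)"

text \<open>A realisation of the continuous-time chain started at x0 on a probability
  space M: X n is the jump chain (tilde xi_n), and sig (Suc n) is the holding time
  sigma_(n+1) (sig 0 is unused).  The joint law is specified by its finite-dimensional
  distributions: X_0 = x0, jump chain with matrix jumpP, and conditionally on the jump
  chain the holding times are independent exponentials with parameter
  rate(X_(n)).\<close>
definition ctmc_model ::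
  "('x \<Rightarrow> 'x \<Rightarrow> real) \<Rightarrow> 'x \<Rightarrow> 'a measure \<Rightarrow> (nat \<Rightarrow> 'a \<Rightarrow> 'x) \<Rightarrow> (nat \<Rightarrow> 'a \<Rightarrow> real) \<Rightarrow> bool" where
  "ctmc_model \<Gamma> x0 M X sig \<longleftrightarrow>
     prob_space M \<and>
     (\<forall>n. X n \<in> measurable M (count_space UNIV)) \<and>
     (\<forall>n. sig n \<in> borel_measurable M) \<and>
     (\<forall>n xs ts. length xs = Suc n \<and> length ts = n \<and> (\<forall>t\<in>set ts. t \<ge> 0) \<longrightarrow>
        measure M {\<omega> \<in> space M. (\<forall>i\<le>n. X i \<omega> = xs ! i) \<and> (\<forall>i<n. sig (Suc i) \<omega> > ts ! i)}
        = (if xs ! 0 = x0 then 1 else 0) *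
          (\<Prod>i<n. jumpP \<Gamma> (xs ! i) (xs ! Suc i) * exp (- rate \<Gamma> (xs ! i) * ts ! i)))"

definition explosion_time :: "(nat \<Rightarrow> 'a \<Rightarrow> real) \<Rightarrow> 'a \<Rightarrow> ennreal" where
  "explosion_time sig \<omega> = (\<Sum>n. ennreal (sig (Suc n) \<omega>))"

end

theory Submission
  imports Defs
begin

text \<open>Let \<open>F(u) = \<integral>\<^sub>0\<^sup>u dy / g(y)\<close>. As \<open>g\<close> increases, \<open>F\<close> is concave, so the bounded function
  \<open>h = F \<circ> f\<close> satisfies \<open>h(y) - h(x) \<le> (f(y) - f(x)) / g(f(x))\<close>. Averaging over the jump rates and
  using \<open>\<Gamma>f \<le> -g(f)\<close> yields the drift inequality \<open>P h(x) + 1/\<gamma>\<^sub>x \<le> h(x)\<close> for the jump chain.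
  Since \<open>E\<^sub>x \<sigma>\<^sub>n\<^sub>+\<^sub>1 = E\<^sub>x [1/\<gamma>(\<xi>\<^sub>n)]\<close>, telescoping gives \<open>E\<^sub>x \<zeta> \<le> h(x) < \<infinity>\<close>.\<close>

section \<open>Generator and jump chain\<close>

lemma nn_integral_count_space_infsum:
  fixes f :: "'a \<Rightarrow> real"
  assumes "f summable_on A" and "\<And>x. x \<in> A \<Longrightarrow> 0 \<le> f x"
  shows "(\<integral>\<^sup>+x. ennreal (f x) \<partial>count_space A) = ennreal (\<Sum>\<^sub>\<infinity>x\<in>A. f x)"
proof -
  have "Infinite_Set_Sum.abs_summable_on f A"
    using assms abs_summable_equivalent summable_on_iff_abs_summable_on_real by blast
  then show ?thesis
    using nn_integral_conv_infsetsum infsetsum_infsum assms(2) by metis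
qed

lemma rate_pos: "qmatrix \<Gamma> \<Longrightarrow> 0 < rate \<Gamma> x"
  unfolding qmatrix_def by auto

lemma jumpP_nonneg: "qmatrix \<Gamma> \<Longrightarrow> 0 \<le> jumpP \<Gamma> x y"
  unfolding qmatrix_def jumpP_def by (auto intro!: divide_nonneg_pos)

lemma summable_on_offdiag_bounded:
  assumes "qmatrix \<Gamma>" and "\<And>y. 0 \<le> h y" and "\<And>y. h y \<le> C"
  shows "(\<lambda>y. \<Gamma> x y * h y) summable_on (UNIV - {x})"
proof (rule summable_on_comparison_test)
  show "(\<lambda>y. \<Gamma> x y * C) summable_on (UNIV - {x})"
    using assms(1) unfolding qmatrix_def by (auto intro: summable_on_cmult_left)
qed (use assms in \<open>auto simp: qmatrix_def intro: mult_left_mono\<close>)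

lemma in_Dom_summable_on:
  assumes "qmatrix \<Gamma>" and "in_Dom \<Gamma> f"
  shows "(\<lambda>y. \<Gamma> x y * f y) summable_on (UNIV - {x})"
proof -
  have "(\<lambda>y. norm (\<Gamma> x y * f y)) summable_on (UNIV - {x})"
    using assms unfolding in_Dom_def qmatrix_def
    by (subst summable_on_cong[where g = "\<lambda>y. \<Gamma> x y * \<bar>f y\<bar>"]) (auto simp: abs_mult)
  then show ?thesis
    by (rule abs_summable_summable)
qed

lemma gen_apply_eq:
  assumes "qmatrix \<Gamma>" and "in_Dom \<Gamma> f"
  shows "gen_apply \<Gamma> f x = (\<Sum>\<^sub>\<infinity>y\<in>UNIV - {x}. \<Gamma> x y * f y) - rate \<Gamma> x * f x"
proof -
  have "gen_apply \<Gamma> f x = (\<Sum>\<^sub>\<infinity>y\<in>insert x (UNIV - {x}). \<Gamma> x y * f y)"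
    unfolding gen_apply_def by (simp add: insert_absorb)
  also have "\<dots> = \<Gamma> x x * f x + (\<Sum>\<^sub>\<infinity>y\<in>UNIV - {x}. \<Gamma> x y * f y)"
    using in_Dom_summable_on[OF assms] by (rule infsum_insert) simp
  finally show ?thesis
    using assms(1) unfolding qmatrix_def by simp
qed

lemma has_sum_jumpP_mult:
  assumes "qmatrix \<Gamma>" and "(\<lambda>y. \<Gamma> x y * h y) summable_on (UNIV - {x})"
  shows "((\<lambda>y. jumpP \<Gamma> x y * h y) has_sum
           (\<Sum>\<^sub>\<infinity>y\<in>UNIV - {x}. \<Gamma> x y * h y) / rate \<Gamma> x) UNIV"
proof -
  have "((\<lambda>y. \<Gamma> x y * h y * (1 / rate \<Gamma> x)) has_sum
          (\<Sum>\<^sub>\<infinity>y\<in>UNIV - {x}. \<Gamma> x y * h y) * (1 / rate \<Gamma> x)) (UNIV - {x})"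
    using assms(2) by (intro has_sum_cmult_left has_sum_infsum)
  moreover have "(\<Sum>\<^sub>\<infinity>y\<in>UNIV - {x}. \<Gamma> x y * h y) * (1 / rate \<Gamma> x)
      = (\<Sum>\<^sub>\<infinity>y\<in>UNIV - {x}. \<Gamma> x y * h y) / rate \<Gamma> x"
    by simp
  ultimately show ?thesis
    by (subst has_sum_cong_neutral[where T = "UNIV - {x}"]) (auto simp: jumpP_def)
qed

lemma nn_integral_jumpP_mult:
  assumes "qmatrix \<Gamma>" and "(\<lambda>y. \<Gamma> x y * h y) summable_on (UNIV - {x})" and "\<And>y. 0 \<le> h y"
  shows "(\<integral>\<^sup>+y. ennreal (jumpP \<Gamma> x y) * ennreal (h y) \<partial>count_space UNIV)
           = ennreal ((\<Sum>\<^sub>\<infinity>y\<in>UNIV - {x}. \<Gamma> x y * h y) / rate \<Gamma> x)"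
proof -
  note sum = has_sum_jumpP_mult[OF assms(1,2)]
  have "(\<integral>\<^sup>+y. ennreal (jumpP \<Gamma> x y) * ennreal (h y) \<partial>count_space UNIV)
          = (\<integral>\<^sup>+y. ennreal (jumpP \<Gamma> x y * h y) \<partial>count_space UNIV)"
    using jumpP_nonneg[OF assms(1)] assms(3) by (simp add: ennreal_mult)
  also have "\<dots> = ennreal (\<Sum>\<^sub>\<infinity>y. jumpP \<Gamma> x y * h y)"
    using sum jumpP_nonneg[OF assms(1)] assms(3)
    by (intro nn_integral_count_space_infsum) (auto simp: has_sum_imp_summable)
  finally show ?thesis
    using infsumI[OF sum] by simp
qed

lemma nn_integral_jumpP:
  assumes "qmatrix \<Gamma>"
  shows "(\<integral>\<^sup>+y. ennreal (jumpP \<Gamma> x y) \<partial>count_space UNIV) = 1"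
proof -
  have "(\<lambda>y. \<Gamma> x y * 1) summable_on (UNIV - {x})"
    using assms unfolding qmatrix_def by simp
  from nn_integral_jumpP_mult[OF assms this] have
    "(\<integral>\<^sup>+y. ennreal (jumpP \<Gamma> x y) \<partial>count_space UNIV) = ennreal (rate \<Gamma> x / rate \<Gamma> x)"
    unfolding rate_def by simp
  then show ?thesis
    using rate_pos[OF assms, of x] by simp
qed

lemma jump_drift_le:
  assumes q: "qmatrix \<Gamma>" and dom: "in_Dom \<Gamma> f"
    and h_nonneg: "\<And>y. 0 \<le> h y" and h_bdd: "\<And>y. h y \<le> C"
    and c: "0 < c" and drift: "gen_apply \<Gamma> f x \<le> - c"
    and h_incr: "\<And>y. h y - h x \<le> (f y - f x) / c"
  shows "(\<integral>\<^sup>+y. ennreal (jumpP \<Gamma> x y) * ennreal (h y) \<partial>count_space UNIV) + ennreal (1 / rate \<Gamma> x)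
           \<le> ennreal (h x)"
proof -
  let ?S = "\<lambda>u. \<Sum>\<^sub>\<infinity>y\<in>UNIV - {x}. \<Gamma> x y * u y"
  have sum_h: "(\<lambda>y. \<Gamma> x y * h y) summable_on (UNIV - {x})"
    using q h_nonneg h_bdd by (rule summable_on_offdiag_bounded)
  have sum_f: "(\<lambda>y. \<Gamma> x y * f y) summable_on (UNIV - {x})"
    using q dom by (rule in_Dom_summable_on)
  have sum_rate: "\<Gamma> x summable_on (UNIV - {x})"
    using q unfolding qmatrix_def by simp
  have "?S h \<le> (\<Sum>\<^sub>\<infinity>y\<in>UNIV - {x}. \<Gamma> x y * (h x - f x / c) + \<Gamma> x y * f y * (1 / c))"
  proof (rule infsum_mono[OF sum_h])
    show "(\<lambda>y. \<Gamma> x y * (h x - f x / c) + \<Gamma> x y * f y * (1 / c)) summable_on (UNIV - {x})"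
      using sum_rate sum_f by (intro summable_on_add summable_on_cmult_left)
    fix y assume "y \<in> UNIV - {x}"
    then have "\<Gamma> x y * h y \<le> \<Gamma> x y * (h x + (f y - f x) / c)"
      using q h_incr unfolding qmatrix_def by (intro mult_left_mono) (auto simp: algebra_simps)
    then show "\<Gamma> x y * h y \<le> \<Gamma> x y * (h x - f x / c) + \<Gamma> x y * f y * (1 / c)"
      by (simp add: algebra_simps diff_divide_distrib)
  qed
  also have "\<dots> = rate \<Gamma> x * (h x - f x / c) + ?S f * (1 / c)"
    unfolding rate_def
    by (simp only: infsum_add[OF summable_on_cmult_left[OF sum_rate] summable_on_cmult_left[OF sum_f]]
        infsum_cmult_left[OF sum_rate] infsum_cmult_left[OF sum_f])
  also have "\<dots> = rate \<Gamma> x * h x + gen_apply \<Gamma> f x / c"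
    using gen_apply_eq[OF q dom, of x] c by (simp add: field_simps)
  also have "\<dots> \<le> rate \<Gamma> x * h x - 1"
    using drift c by (simp add: divide_le_eq)
  finally have bound: "?S h + 1 \<le> rate \<Gamma> x * h x"
    by simp
  have "0 \<le> ?S h"
    using q h_nonneg unfolding qmatrix_def by (intro infsum_nonneg) auto
  then have "(\<integral>\<^sup>+y. ennreal (jumpP \<Gamma> x y) * ennreal (h y) \<partial>count_space UNIV) + ennreal (1 / rate \<Gamma> x)
      = ennreal ((?S h + 1) / rate \<Gamma> x)"
    using rate_pos[OF q, of x]
    by (simp add: nn_integral_jumpP_mult[OF q sum_h h_nonneg] add_divide_distrib ennreal_plus)
  also have "\<dots> \<le> ennreal (h x)"
    using bound rate_pos[OF q, of x] by (intro ennreal_leI) (simp add: divide_le_eq mult.commute)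
  finally show ?thesis .
qed

section \<open>The primitive of \<open>1/g\<close>\<close>

lemma borel_measurable_recip_indicator:
  fixes g :: "real \<Rightarrow> real"
  assumes "mono_on {0<..} g" and [measurable]: "A \<in> sets borel" and "A \<subseteq> {0<..}"
  shows "(\<lambda>y. ennreal (1 / g y) * indicator A y) \<in> borel_measurable lborel"
proof -
  have "g \<in> borel_measurable (restrict_space borel {0<..})"
    using assms(1) by (rule borel_measurable_mono_on_fnc)
  then have "(\<lambda>y. ennreal (1 / g y)) \<in> borel_measurable (restrict_space borel {0<..})"
    by measurable
  then have [measurable]: "(\<lambda>y. ennreal (1 / g y) * indicator {0<..} y) \<in> borel_measurable borel"
    by (subst (asm) borel_measurable_restrict_space_iff_ennreal) auto
  have "(\<lambda>y. ennreal (1 / g y) * indicator A y) = (\<lambda>y. ennreal (1 / g y) * indicator {0<..} y * indicator A y)"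
    using assms(3) by (auto simp: fun_eq_iff split: split_indicator)
  also have "\<dots> \<in> borel_measurable lborel"
    by measurable
  finally show ?thesis .
qed

lemma nn_integral_recip_Ioc_split:
  fixes g :: "real \<Rightarrow> real"
  assumes "mono_on {0<..} g" and "0 \<le> a" and "a \<le> c"
  shows "(\<integral>\<^sup>+y\<in>{0<..c}. ennreal (1 / g y) \<partial>lborel)
           = (\<integral>\<^sup>+y\<in>{0<..a}. ennreal (1 / g y) \<partial>lborel) + (\<integral>\<^sup>+y\<in>{a<..c}. ennreal (1 / g y) \<partial>lborel)"
proof -
  have "(\<integral>\<^sup>+y\<in>{0<..c}. ennreal (1 / g y) \<partial>lborel)
      = (\<integral>\<^sup>+y. ennreal (1 / g y) * indicator {0<..a} y + ennreal (1 / g y) * indicator {a<..c} y \<partial>lborel)"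
    using assms by (intro nn_integral_cong) (auto split: split_indicator)
  also have "\<dots> = (\<integral>\<^sup>+y\<in>{0<..a}. ennreal (1 / g y) \<partial>lborel) + (\<integral>\<^sup>+y\<in>{a<..c}. ennreal (1 / g y) \<partial>lborel)"
    using assms by (intro nn_integral_add borel_measurable_recip_indicator) auto
  finally show ?thesis .
qed

lemma nn_integral_recip_Ioc_le:
  fixes g :: "real \<Rightarrow> real"
  assumes "mono_on {0<..} g" and "\<forall>y>0. 0 < g y" and "0 < a" and "a \<le> c"
  shows "(\<integral>\<^sup>+y\<in>{a<..c}. ennreal (1 / g y) \<partial>lborel) \<le> ennreal ((c - a) / g a)"
proof -
  have "(\<integral>\<^sup>+y\<in>{a<..c}. ennreal (1 / g y) \<partial>lborel) \<le> (\<integral>\<^sup>+y\<in>{a<..c}. ennreal (1 / g a) \<partial>lborel)"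
  proof (intro nn_integral_mono)
    fix y
    have "y \<in> {a<..c} \<Longrightarrow> 1 / g y \<le> 1 / g a"
      using assms by (intro divide_left_mono) (auto simp: mono_on_def)
    then show "ennreal (1 / g y) * indicator {a<..c} y \<le> ennreal (1 / g a) * indicator {a<..c} y"
      by (auto intro: ennreal_leI split: split_indicator)
  qed
  also have "\<dots> = ennreal ((c - a) / g a)"
    using assms(2)[rule_format, OF assms(3)] assms(4)
    by (simp add: nn_integral_cmult_indicator flip: ennreal_mult)
  finally show ?thesis .
qed

lemma nn_integral_recip_Ioc_ge:
  fixes g :: "real \<Rightarrow> real"
  assumes "mono_on {0<..} g" and "\<forall>y>0. 0 < g y" and "0 < a" and "a \<le> c"
  shows "ennreal ((c - a) / g c) \<le> (\<integral>\<^sup>+y\<in>{a<..c}. ennreal (1 / g y) \<partial>lborel)"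
proof -
  have "ennreal ((c - a) / g c) = (\<integral>\<^sup>+y\<in>{a<..c}. ennreal (1 / g c) \<partial>lborel)"
    using assms(2)[rule_format, of c] assms(3,4)
    by (simp add: nn_integral_cmult_indicator flip: ennreal_mult)
  also have "\<dots> \<le> (\<integral>\<^sup>+y\<in>{a<..c}. ennreal (1 / g y) \<partial>lborel)"
  proof (intro nn_integral_mono)
    fix y
    have "y \<in> {a<..c} \<Longrightarrow> 1 / g c \<le> 1 / g y"
      using assms by (intro divide_left_mono) (auto simp: mono_on_def)
    then show "ennreal (1 / g c) * indicator {a<..c} y \<le> ennreal (1 / g y) * indicator {a<..c} y"
      by (auto intro: ennreal_leI split: split_indicator)
  qed
  finally show ?thesis .
qed

text \<open>Since \<open>enn2real \<infinity> = 0\<close>, this is the primitive \<open>F\<close> only on \<open>(0, b]\<close> for a \<open>b\<close> at which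
  the integral is finite.\<close>
definition recip_primitive :: "(real \<Rightarrow> real) \<Rightarrow> real \<Rightarrow> real" where
  "recip_primitive g u = enn2real (\<integral>\<^sup>+y\<in>{0<..u}. ennreal (1 / g y) \<partial>lborel)"

lemma nn_integral_recip_finite:
  fixes g :: "real \<Rightarrow> real"
  assumes "(\<integral>\<^sup>+y\<in>{0<..b}. ennreal (1 / g y) \<partial>lborel) < \<infinity>" and "u \<le> b"
  shows "(\<integral>\<^sup>+y\<in>{0<..u}. ennreal (1 / g y) \<partial>lborel) < \<infinity>"
proof -
  have "(\<integral>\<^sup>+y\<in>{0<..u}. ennreal (1 / g y) \<partial>lborel) \<le> (\<integral>\<^sup>+y\<in>{0<..b}. ennreal (1 / g y) \<partial>lborel)"
    using assms(2) by (intro nn_integral_mono mult_left_mono) (auto split: split_indicator)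
  then show ?thesis
    using assms(1) by (rule le_less_trans)
qed

lemma recip_primitive_le:
  fixes g :: "real \<Rightarrow> real"
  assumes "(\<integral>\<^sup>+y\<in>{0<..b}. ennreal (1 / g y) \<partial>lborel) < \<infinity>" and "u \<le> b"
  shows "recip_primitive g u \<le> recip_primitive g b"
  unfolding recip_primitive_def using assms
  by (intro enn2real_mono nn_integral_mono mult_left_mono) (auto split: split_indicator)

lemma recip_primitive_add:
  fixes g :: "real \<Rightarrow> real"
  assumes "mono_on {0<..} g" and "(\<integral>\<^sup>+y\<in>{0<..b}. ennreal (1 / g y) \<partial>lborel) < \<infinity>"
    and "0 \<le> a" and "a \<le> c" and "c \<le> b"
  shows "(\<integral>\<^sup>+y\<in>{a<..c}. ennreal (1 / g y) \<partial>lborel) < \<infinity>"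
    and "recip_primitive g c = recip_primitive g a + enn2real (\<integral>\<^sup>+y\<in>{a<..c}. ennreal (1 / g y) \<partial>lborel)"
proof -
  note split = nn_integral_recip_Ioc_split[OF assms(1,3,4)]
  have "(\<integral>\<^sup>+y\<in>{0<..c}. ennreal (1 / g y) \<partial>lborel) < \<infinity>"
    using assms(2,5) by (rule nn_integral_recip_finite)
  then have fin: "(\<integral>\<^sup>+y\<in>{0<..a}. ennreal (1 / g y) \<partial>lborel) < \<infinity>"
      "(\<integral>\<^sup>+y\<in>{a<..c}. ennreal (1 / g y) \<partial>lborel) < \<infinity>"
    unfolding split by simp_all
  then show "(\<integral>\<^sup>+y\<in>{a<..c}. ennreal (1 / g y) \<partial>lborel) < \<infinity>"
    by simp
  show "recip_primitive g c = recip_primitive g a + enn2real (\<integral>\<^sup>+y\<in>{a<..c}. ennreal (1 / g y) \<partial>lborel)"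
    unfolding recip_primitive_def split using fin by (simp add: enn2real_plus)
qed

lemma recip_primitive_diff_le:
  fixes g :: "real \<Rightarrow> real"
  assumes mono: "mono_on {0<..} g" and pos: "\<forall>y>0. 0 < g y"
    and fin: "(\<integral>\<^sup>+y\<in>{0<..b}. ennreal (1 / g y) \<partial>lborel) < \<infinity>"
    and a: "0 < a" "a \<le> b" and c: "0 < c" "c \<le> b"
  shows "recip_primitive g c - recip_primitive g a \<le> (c - a) / g a"
proof (cases "a \<le> c")
  case True
  note add = recip_primitive_add[OF mono fin _ True c(2)]
  have "enn2real (\<integral>\<^sup>+y\<in>{a<..c}. ennreal (1 / g y) \<partial>lborel) \<le> (c - a) / g a"
    using nn_integral_recip_Ioc_le[OF mono pos a(1) True] pos a True
    by (intro enn2real_leI) auto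
  then show ?thesis
    using add a by simp
next
  case False
  note add = recip_primitive_add[OF mono fin _ _ a(2), of c]
  have "(a - c) / g a \<le> enn2real (\<integral>\<^sup>+y\<in>{c<..a}. ennreal (1 / g y) \<partial>lborel)"
    using enn2real_mono[OF nn_integral_recip_Ioc_ge[OF mono pos c(1), of a]] add(1) c False
      pos[rule_format, OF a(1)]
    by auto
  then show ?thesis
    using add c False by (simp add: diff_divide_distrib)
qed

section \<open>Expected holding times\<close>

lemma nn_integral_exp_neg:
  fixes r :: real
  assumes "0 < r"
  shows "(\<integral>\<^sup>+t\<in>{0..}. ennreal (exp (- r * t)) \<partial>lborel) = ennreal (1 / r)"
proof -
  let ?I = "\<integral>\<^sup>+t\<in>{0..}. ennreal (exp (- r * t)) \<partial>lborel"
  interpret prob_space "density lborel (exponential_density r)"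
    using assms by (rule prob_space_exponential_density)
  have "1 = (\<integral>\<^sup>+t. ennreal (exponential_density r t) \<partial>lborel)"
    using emeasure_space_1 by (simp add: emeasure_density)
  also have "\<dots> = (\<integral>\<^sup>+t. ennreal r * (ennreal (exp (- r * t)) * indicator {0..} t) \<partial>lborel)"
    using assms
    by (intro nn_integral_cong)
       (auto simp: exponential_density_def mult.commute split: split_indicator simp flip: ennreal_mult)
  also have "\<dots> = ennreal r * ?I"
    by (rule nn_integral_cmult) simp
  finally have "ennreal (1 / r) = ennreal (1 / r) * (ennreal r * ?I)"
    by simp
  also have "\<dots> = ?I"
    using assms by (simp add: mult.assoc[symmetric] flip: ennreal_mult)
  finally show ?thesis ..
qed

locale ctmc =
  fixes \<Gamma> :: "'x::countable \<Rightarrow> 'x \<Rightarrow> real" and x0 :: 'x and M :: "'a measure"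
    and X :: "nat \<Rightarrow> 'a \<Rightarrow> 'x" and sig :: "nat \<Rightarrow> 'a \<Rightarrow> real"
  assumes qmatrix: "qmatrix \<Gamma>" and model: "ctmc_model \<Gamma> x0 M X sig"
begin

sublocale prob_space M
  using model unfolding ctmc_model_def by auto

lemma measurable_X [measurable]: "X n \<in> measurable M (count_space UNIV)"
  using model unfolding ctmc_model_def by auto

lemma measurable_sig [measurable]: "sig n \<in> borel_measurable M"
  using model unfolding ctmc_model_def by auto

lemma emeasure_cylinder:
  assumes "length xs = Suc n" and "length ts = n" and "\<forall>t\<in>set ts. 0 \<le> t"
  shows "emeasure M {\<omega>\<in>space M. (\<forall>i\<le>n. X i \<omega> = xs ! i) \<and> (\<forall>i<n. ts ! i < sig (Suc i) \<omega>)}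
           = ennreal ((if xs ! 0 = x0 then 1 else 0) *
               (\<Prod>i<n. jumpP \<Gamma> (xs ! i) (xs ! Suc i) * exp (- rate \<Gamma> (xs ! i) * ts ! i)))"
proof -
  have "measure M {\<omega>\<in>space M. (\<forall>i\<le>n. X i \<omega> = xs ! i) \<and> (\<forall>i<n. ts ! i < sig (Suc i) \<omega>)}
      = (if xs ! 0 = x0 then 1 else 0) *
          (\<Prod>i<n. jumpP \<Gamma> (xs ! i) (xs ! Suc i) * exp (- rate \<Gamma> (xs ! i) * ts ! i))"
    using model assms unfolding ctmc_model_def by blast
  then show ?thesis
    by (simp add: emeasure_eq_measure)
qed

definition paths :: "nat \<Rightarrow> 'x list set" where
  "paths n = {xs. length xs = Suc n}"

definition path_weight :: "'x list \<Rightarrow> real" where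
  "path_weight xs = (if xs ! 0 = x0 then 1 else 0) * (\<Prod>i<length xs - 1. jumpP \<Gamma> (xs ! i) (xs ! Suc i))"

text \<open>\<open>path_expectation n \<phi>\<close> is \<open>(P\<^sup>n \<phi>)(x\<^sub>0)\<close>, the expectation of \<open>\<phi>(\<xi>\<^sub>n)\<close> for the jump chain,
  written as a sum over its paths.\<close>
definition path_expectation :: "nat \<Rightarrow> ('x \<Rightarrow> ennreal) \<Rightarrow> ennreal" where
  "path_expectation n \<phi> = (\<integral>\<^sup>+xs. ennreal (path_weight xs) * \<phi> (last xs) \<partial>count_space (paths n))"

text \<open>\<open>ctmc_model\<close> only prescribes events with strict lower bounds on the holding times, so a path
  is observed together with positive holding times; this costs nothing by \<open>AE_holding_times_pos\<close>.\<close>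
definition path_event :: "'x list \<Rightarrow> 'a set" where
  "path_event xs =
     {\<omega>\<in>space M. (\<forall>i<length xs. X i \<omega> = xs ! i) \<and> (\<forall>i<length xs - 1. 0 < sig (Suc i) \<omega>)}"

lemma sets_path_event [measurable]: "path_event xs \<in> sets M"
  unfolding path_event_def by measurable

lemma countable_paths: "countable (paths n)"
  by (rule countableI_type)

lemma path_weight_nonneg: "0 \<le> path_weight xs"
  unfolding path_weight_def using jumpP_nonneg[OF qmatrix] by (auto intro!: prod_nonneg)

lemma path_weight_snoc:
  assumes "length xs = Suc n"
  shows "path_weight (xs @ [z]) = path_weight xs * jumpP \<Gamma> (last xs) z"
proof -
  have "last xs = xs ! n"
    using assms last_conv_nth[of xs] by force
  then have "(\<Prod>i<Suc n. jumpP \<Gamma> ((xs @ [z]) ! i) ((xs @ [z]) ! Suc i))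
      = (\<Prod>i<n. jumpP \<Gamma> (xs ! i) (xs ! Suc i)) * jumpP \<Gamma> (last xs) z"
    using assms by (simp add: nth_append)
  then show ?thesis
    using assms unfolding path_weight_def by (simp add: nth_append)
qed

lemma path_expectation_add:
  "path_expectation n (\<lambda>y. a y + b y) = path_expectation n a + path_expectation n b"
  unfolding path_expectation_def by (simp add: distrib_left nn_integral_add)

lemma path_expectation_mono:
  "(\<And>y. a y \<le> b y) \<Longrightarrow> path_expectation n a \<le> path_expectation n b"
  unfolding path_expectation_def by (intro nn_integral_mono mult_left_mono) auto

lemma path_expectation_0: "path_expectation 0 \<phi> = \<phi> x0"
proof -
  have bij: "bij_betw (\<lambda>a. [a]) UNIV (paths 0)"
    unfolding paths_def by (rule bij_betwI') (auto simp: length_Suc_conv)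
  have "path_expectation 0 \<phi> = (\<integral>\<^sup>+a. ennreal (path_weight [a]) * \<phi> (last [a]) \<partial>count_space UNIV)"
    unfolding path_expectation_def by (rule nn_integral_bij_count_space[OF bij, symmetric])
  also have "\<dots> = (\<integral>\<^sup>+a. \<phi> x0 * indicator {x0} a \<partial>count_space UNIV)"
    by (intro nn_integral_cong) (auto simp: path_weight_def split: split_indicator)
  also have "\<dots> = \<phi> x0"
    by (simp add: nn_integral_cmult_indicator)
  finally show ?thesis .
qed

lemma bij_betw_snoc_paths: "bij_betw (\<lambda>(xs, z). xs @ [z]) (paths n \<times> UNIV) (paths (Suc n))"
proof (rule bij_betw_byWitness[where f' = "\<lambda>ys. (butlast ys, last ys)"])
  show "\<forall>ys\<in>paths (Suc n). (case (butlast ys, last ys) of (xs, z) \<Rightarrow> xs @ [z]) = ys"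
    by (auto simp: paths_def intro: append_butlast_last_id)
qed (auto simp: paths_def)

lemma path_expectation_Suc:
  "path_expectation (Suc n) \<phi>
     = path_expectation n (\<lambda>y. \<integral>\<^sup>+z. ennreal (jumpP \<Gamma> y z) * \<phi> z \<partial>count_space UNIV)"
proof -
  let ?F = "\<lambda>(xs, z). ennreal (path_weight xs) * (ennreal (jumpP \<Gamma> (last xs) z) * \<phi> z)"
  interpret pair_sigma_finite "count_space (paths n)" "count_space (UNIV :: 'x set)"
    by (intro pair_sigma_finite.intro sigma_finite_measure_count_space_countable countable_paths) auto
  have "path_expectation (Suc n) \<phi> = (\<integral>\<^sup>+p. ?F p \<partial>count_space (paths n \<times> UNIV))"
    unfolding path_expectation_def
    by (subst nn_integral_bij_count_space[OF bij_betw_snoc_paths, symmetric])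
       (auto intro!: nn_integral_cong simp: paths_def path_weight_snoc ennreal_mult path_weight_nonneg
          jumpP_nonneg[OF qmatrix] mult.assoc)
  also have "\<dots> = (\<integral>\<^sup>+p. ?F p \<partial>(count_space (paths n) \<Otimes>\<^sub>M count_space UNIV))"
    by (simp add: pair_measure_countable countable_paths)
  also have "\<dots> = (\<integral>\<^sup>+xs. \<integral>\<^sup>+z. ?F (xs, z) \<partial>count_space UNIV \<partial>count_space (paths n))"
    by (intro M2.nn_integral_fst[symmetric]) (simp add: pair_measure_countable countable_paths)
  also have "\<dots> = path_expectation n (\<lambda>y. \<integral>\<^sup>+z. ennreal (jumpP \<Gamma> y z) * \<phi> z \<partial>count_space UNIV)"
    unfolding path_expectation_def by (simp add: nn_integral_cmult)
  finally show ?thesis .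
qed

lemma path_expectation_one: "path_expectation n (\<lambda>_. 1) = 1"
  by (induction n) (simp_all add: path_expectation_0 path_expectation_Suc nn_integral_jumpP[OF qmatrix])

lemma holding_pos_eq_UN_path_event:
  "{\<omega>\<in>space M. (\<forall>i<n. 0 < sig (Suc i) \<omega>) \<and> P \<omega>} = (\<Union>xs\<in>paths n. {\<omega>\<in>path_event xs. P \<omega>})"
proof (intro equalityI subsetI)
  fix \<omega> assume \<omega>: "\<omega> \<in> {\<omega>\<in>space M. (\<forall>i<n. 0 < sig (Suc i) \<omega>) \<and> P \<omega>}"
  let ?xs = "map (\<lambda>i. X i \<omega>) [0..<Suc n]"
  have "?xs \<in> paths n" and "\<omega> \<in> path_event ?xs"
    using \<omega> unfolding paths_def path_event_def by (auto simp del: upt_Suc)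
  with \<omega> show "\<omega> \<in> (\<Union>xs\<in>paths n. {\<omega>\<in>path_event xs. P \<omega>})"
    by auto
qed (auto simp: paths_def path_event_def)

lemma disjoint_family_path_event: "disjoint_family_on (\<lambda>xs. {\<omega>\<in>path_event xs. P \<omega>}) (paths n)"
  unfolding disjoint_family_on_def
proof (intro ballI impI, rule ccontr)
  fix xs ys assume xs: "xs \<in> paths n" and ys: "ys \<in> paths n" and "xs \<noteq> ys"
    and "{\<omega>\<in>path_event xs. P \<omega>} \<inter> {\<omega>\<in>path_event ys. P \<omega>} \<noteq> {}"
  then obtain \<omega> where "\<omega> \<in> path_event xs" "\<omega> \<in> path_event ys"
    by auto
  then have "xs ! i = ys ! i" if "i < Suc n" for i
    using that xs ys unfolding path_event_def paths_def by auto
  with xs ys \<open>xs \<noteq> ys\<close> show False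
    unfolding paths_def by (auto intro: nth_equalityI)
qed

lemma emeasure_holding_pos:
  assumes [measurable]: "Measurable.pred M P"
  shows "emeasure M {\<omega>\<in>space M. (\<forall>i<n. 0 < sig (Suc i) \<omega>) \<and> P \<omega>}
           = (\<integral>\<^sup>+xs. emeasure M {\<omega>\<in>path_event xs. P \<omega>} \<partial>count_space (paths n))"
proof -
  have "{\<omega>\<in>path_event xs. P \<omega>} \<in> sets M" for xs
  proof -
    have "{\<omega>\<in>path_event xs. P \<omega>} = path_event xs \<inter> {\<omega>\<in>space M. P \<omega>}"
      unfolding path_event_def by auto
    also have "\<dots> \<in> sets M"
      by measurable
    finally show ?thesis .
  qed
  then show ?thesis
    unfolding holding_pos_eq_UN_path_event
    using countable_paths disjoint_family_path_event by (rule emeasure_UN_countable)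
qed

lemma emeasure_path_event:
  assumes "length xs = Suc n"
  shows "emeasure M (path_event xs) = ennreal (path_weight xs)"
proof -
  have "path_event xs
      = {\<omega>\<in>space M. (\<forall>i\<le>n. X i \<omega> = xs ! i) \<and> (\<forall>i<n. replicate n 0 ! i < sig (Suc i) \<omega>)}"
    unfolding path_event_def using assms by (auto simp: less_Suc_eq_le)
  then show ?thesis
    using emeasure_cylinder[of xs n "replicate n 0"] assms unfolding path_weight_def by simp
qed

lemma path_event_holding_gt_eq_UN:
  assumes "length xs = Suc n"
  shows "{\<omega>\<in>path_event xs. t < sig (Suc n) \<omega>}
    = (\<Union>z. {\<omega>\<in>space M. (\<forall>i\<le>Suc n. X i \<omega> = (xs @ [z]) ! i)
                       \<and> (\<forall>i<Suc n. (replicate n 0 @ [t]) ! i < sig (Suc i) \<omega>)})"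
    (is "?A = (\<Union>z. ?B z)")
proof (intro equalityI subsetI)
  fix \<omega> assume "\<omega> \<in> ?A"
  then have "\<omega> \<in> ?B (X (Suc n) \<omega>)"
    using assms by (auto simp: path_event_def nth_append le_Suc_eq less_Suc_eq)
  then show "\<omega> \<in> (\<Union>z. ?B z)"
    by blast
qed (use assms in \<open>auto simp: path_event_def nth_append le_Suc_eq less_Suc_eq\<close>)

lemma emeasure_path_event_holding_gt:
  assumes len: "length xs = Suc n" and "0 \<le> t"
  shows "emeasure M {\<omega>\<in>path_event xs. t < sig (Suc n) \<omega>}
           = ennreal (path_weight xs * exp (- rate \<Gamma> (last xs) * t))"
proof -
  define ts where "ts = replicate n 0 @ [t]"
  define B where "B z = {\<omega>\<in>space M. (\<forall>i\<le>Suc n. X i \<omega> = (xs @ [z]) ! i)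
                                   \<and> (\<forall>i<Suc n. ts ! i < sig (Suc i) \<omega>)}" for z
  have last_xs: "last xs = xs ! n"
    using len last_conv_nth[of xs] by force
  have "disjoint_family B"
    unfolding disjoint_family_on_def B_def using len by auto (metis le_refl nth_append_length)
  moreover have "B z \<in> sets M" for z
    unfolding B_def by measurable
  moreover have "{\<omega>\<in>path_event xs. t < sig (Suc n) \<omega>} = (\<Union>z. B z)"
    unfolding B_def ts_def using len by (rule path_event_holding_gt_eq_UN)
  ultimately have "emeasure M {\<omega>\<in>path_event xs. t < sig (Suc n) \<omega>}
      = (\<integral>\<^sup>+z. emeasure M (B z) \<partial>count_space UNIV)"
    by (simp add: emeasure_UN_countable)
  also have "\<dots> = (\<integral>\<^sup>+z. ennreal (path_weight xs * exp (- rate \<Gamma> (last xs) * t))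
                         * ennreal (jumpP \<Gamma> (last xs) z) \<partial>count_space UNIV)"
  proof (intro nn_integral_cong)
    fix z
    have "(\<Prod>i<n. jumpP \<Gamma> ((xs @ [z]) ! i) ((xs @ [z]) ! Suc i) * exp (- rate \<Gamma> ((xs @ [z]) ! i) * ts ! i))
        = (\<Prod>i<n. jumpP \<Gamma> (xs ! i) (xs ! Suc i))"
      using len by (intro prod.cong) (auto simp: nth_append ts_def)
    then have "emeasure M (B z) = ennreal (path_weight xs * exp (- rate \<Gamma> (last xs) * t) * jumpP \<Gamma> (last xs) z)"
      unfolding B_def using emeasure_cylinder[of "xs @ [z]" "Suc n" ts] len last_xs \<open>0 \<le> t\<close>
      by (simp add: ts_def path_weight_def nth_append mult_ac)
    then show "emeasure M (B z) = ennreal (path_weight xs * exp (- rate \<Gamma> (last xs) * t))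
                                  * ennreal (jumpP \<Gamma> (last xs) z)"
      by (simp add: ennreal_mult path_weight_nonneg jumpP_nonneg[OF qmatrix])
  qed
  also have "\<dots> = ennreal (path_weight xs * exp (- rate \<Gamma> (last xs) * t))"
    by (simp add: nn_integral_cmult nn_integral_jumpP[OF qmatrix])
  finally show ?thesis .
qed

lemma AE_holding_times_pos: "AE \<omega> in M. \<forall>i<n. 0 < sig (Suc i) \<omega>"
proof -
  have "emeasure M {\<omega>\<in>space M. (\<forall>i<n. 0 < sig (Suc i) \<omega>) \<and> True}
      = (\<integral>\<^sup>+xs. emeasure M {\<omega>\<in>path_event xs. True} \<partial>count_space (paths n))"
    by (rule emeasure_holding_pos) simp
  also have "\<dots> = path_expectation n (\<lambda>_. 1)"
    unfolding path_expectation_def using sets_path_event[THEN sets.sets_into_space]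
    by (intro nn_integral_cong) (auto simp: emeasure_path_event paths_def Int_absorb1 Collect_mem_eq)
  also have "\<dots> = 1"
    by (rule path_expectation_one)
  finally show ?thesis
    by (subst AE_iff_emeasure_eq_1) auto
qed

lemma emeasure_holding_gt:
  assumes "0 \<le> t"
  shows "emeasure M {\<omega>\<in>space M. t < sig (Suc n) \<omega>}
           = path_expectation n (\<lambda>y. ennreal (exp (- rate \<Gamma> y * t)))"
proof -
  have "emeasure M {\<omega>\<in>space M. t < sig (Suc n) \<omega>}
      = emeasure M {\<omega>\<in>space M. (\<forall>i<n. 0 < sig (Suc i) \<omega>) \<and> t < sig (Suc n) \<omega>}"
    using AE_holding_times_pos[of n] by (intro emeasure_Collect_eq_AE) (auto elim!: eventually_mono)
  also have "\<dots> = (\<integral>\<^sup>+xs. emeasure M {\<omega>\<in>path_event xs. t < sig (Suc n) \<omega>} \<partial>count_space (paths n))"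
    by (rule emeasure_holding_pos) measurable
  also have "\<dots> = path_expectation n (\<lambda>y. ennreal (exp (- rate \<Gamma> y * t)))"
    unfolding path_expectation_def using assms
    by (intro nn_integral_cong)
       (auto simp: emeasure_path_event_holding_gt paths_def ennreal_mult path_weight_nonneg)
  finally show ?thesis .
qed

lemma nn_integral_holding_time:
  "(\<integral>\<^sup>+\<omega>. ennreal (sig (Suc n) \<omega>) \<partial>M) = path_expectation n (\<lambda>y. ennreal (1 / rate \<Gamma> y))"
proof -
  let ?s = "sig (Suc n)"
  interpret pair_sigma_finite M lborel
    by (intro pair_sigma_finite.intro) unfold_locales
  have "(\<lambda>(\<omega>, t). indicator {0..<?s \<omega>} t :: ennreal)
      = (\<lambda>p. if 0 \<le> snd p \<and> snd p < ?s (fst p) then 1 else 0)"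
    by (auto simp: fun_eq_iff split: split_indicator)
  then have meas: "(\<lambda>(\<omega>, t). indicator {0..<?s \<omega>} t :: ennreal) \<in> borel_measurable (M \<Otimes>\<^sub>M lborel)"
    by simp
  have "ennreal (?s \<omega>) = emeasure lborel {0..<?s \<omega>}" for \<omega>
    by (cases "0 \<le> ?s \<omega>") (auto simp: ennreal_neg)
  then have "(\<integral>\<^sup>+\<omega>. ennreal (?s \<omega>) \<partial>M) = (\<integral>\<^sup>+\<omega>. \<integral>\<^sup>+t. indicator {0..<?s \<omega>} t \<partial>lborel \<partial>M)"
    by simp
  also have "\<dots> = (\<integral>\<^sup>+t. \<integral>\<^sup>+\<omega>. indicator {0..<?s \<omega>} t \<partial>M \<partial>lborel)"
    using Fubini'[OF meas] by simp
  also have "\<dots> = (\<integral>\<^sup>+t\<in>{0..}. path_expectation n (\<lambda>y. ennreal (exp (- rate \<Gamma> y * t))) \<partial>lborel)"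
  proof (intro nn_integral_cong)
    fix t :: real
    have "0 \<le> t \<Longrightarrow> (\<integral>\<^sup>+\<omega>. indicator {0..<?s \<omega>} t \<partial>M)
        = (\<integral>\<^sup>+\<omega>. indicator {\<omega>\<in>space M. t < ?s \<omega>} \<omega> \<partial>M)"
      by (intro nn_integral_cong) (auto split: split_indicator)
    then have "0 \<le> t \<Longrightarrow> (\<integral>\<^sup>+\<omega>. indicator {0..<?s \<omega>} t \<partial>M) = emeasure M {\<omega>\<in>space M. t < ?s \<omega>}"
      by simp
    then show "(\<integral>\<^sup>+\<omega>. indicator {0..<?s \<omega>} t \<partial>M)
        = path_expectation n (\<lambda>y. ennreal (exp (- rate \<Gamma> y * t))) * indicator {0..} t"
      by (auto simp: emeasure_holding_gt split: split_indicator)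
  qed
  also have "\<dots> = (\<integral>\<^sup>+t. \<integral>\<^sup>+xs. ennreal (path_weight xs)
                        * (ennreal (exp (- rate \<Gamma> (last xs) * t)) * indicator {0..} t)
                      \<partial>count_space (paths n) \<partial>lborel)"
    unfolding path_expectation_def
    by (intro nn_integral_cong) (simp add: nn_integral_multc[symmetric] mult.assoc)
  also have "\<dots> = (\<integral>\<^sup>+xs. \<integral>\<^sup>+t. ennreal (path_weight xs)
                        * (ennreal (exp (- rate \<Gamma> (last xs) * t)) * indicator {0..} t)
                      \<partial>lborel \<partial>count_space (paths n))"
    by (rule nn_integral_count_space_nn_integral[OF countable_paths]) measurable
  also have "\<dots> = path_expectation n (\<lambda>y. \<integral>\<^sup>+t\<in>{0..}. ennreal (exp (- rate \<Gamma> y * t)) \<partial>lborel)"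
    unfolding path_expectation_def by (simp add: nn_integral_cmult)
  also have "\<dots> = path_expectation n (\<lambda>y. ennreal (1 / rate \<Gamma> y))"
    by (simp only: nn_integral_exp_neg[OF rate_pos[OF qmatrix]])
  finally show ?thesis .
qed

lemma nn_integral_explosion_time_le:
  assumes "\<And>y. 0 \<le> h y"
    and drift: "\<And>y. (\<integral>\<^sup>+z. ennreal (jumpP \<Gamma> y z) * ennreal (h z) \<partial>count_space UNIV)
                      + ennreal (1 / rate \<Gamma> y) \<le> ennreal (h y)"
  shows "(\<integral>\<^sup>+\<omega>. explosion_time sig \<omega> \<partial>M) \<le> ennreal (h x0)"
proof -
  define E where "E k = path_expectation k (\<lambda>y. ennreal (1 / rate \<Gamma> y))" for k
  define H where "H k = path_expectation k (\<lambda>y. ennreal (h y))" for k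
  have step: "E k + H (Suc k) \<le> H k" for k
  proof -
    have "E k + H (Suc k) = path_expectation k (\<lambda>y.
        (\<integral>\<^sup>+z. ennreal (jumpP \<Gamma> y z) * ennreal (h z) \<partial>count_space UNIV) + ennreal (1 / rate \<Gamma> y))"
      unfolding E_def H_def by (simp add: path_expectation_Suc path_expectation_add add.commute)
    also have "\<dots> \<le> H k"
      unfolding H_def using drift by (rule path_expectation_mono)
    finally show ?thesis .
  qed
  have "(\<Sum>k<N. E k) + H N \<le> ennreal (h x0)" for N
  proof (induction N)
    case 0
    then show ?case
      by (simp add: H_def path_expectation_0)
  next
    case (Suc N)
    have "(\<Sum>k<Suc N. E k) + H (Suc N) \<le> (\<Sum>k<N. E k) + H N"
      using step[of N] by (simp add: add.assoc add_left_mono)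
    then show ?case
      using Suc.IH by (rule order_trans)
  qed
  then have partial_sums: "(\<Sum>k<N. E k) \<le> ennreal (h x0)" for N
    by (meson add_increasing2 order_trans order_refl zero_le)
  have "(\<integral>\<^sup>+\<omega>. explosion_time sig \<omega> \<partial>M) = (\<Sum>k. \<integral>\<^sup>+\<omega>. ennreal (sig (Suc k) \<omega>) \<partial>M)"
    unfolding explosion_time_def by (rule nn_integral_suminf) measurable
  also have "\<dots> = (\<Sum>k. E k)"
    unfolding E_def nn_integral_holding_time ..
  also have "\<dots> \<le> ennreal (h x0)"
    by (rule suminf_le_const[OF summableI partial_sums])
  finally show ?thesis .
qed

end

theorem proposition1p1:
  fixes \<Gamma> :: "'x::countable \<Rightarrow> 'x \<Rightarrow> real"
    and f :: "'x \<Rightarrow> real" and g :: "real \<Rightarrow> real"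
  assumes "infinite (UNIV :: 'x set)"
    and "qmatrix \<Gamma>" and "jump_irreducible \<Gamma>"
    and "in_Dom \<Gamma> f" and "\<forall>x. f x > 0" and "bdd_above (range f)"
    and "mono_on {0<..} g" and "\<forall>y>0. g y > 0"
    and "(\<integral>\<^sup>+ y \<in> {0<..Sup (range f)}. ennreal (1 / g y) \<partial>lborel) < \<infinity>"
    and "\<forall>x. gen_apply \<Gamma> f x \<le> - g (f x)"
  shows "\<forall>x (M :: 'a measure) X sig. ctmc_model \<Gamma> x M X sig \<longrightarrow>
           (\<integral>\<^sup>+ \<omega>. explosion_time sig \<omega> \<partial>M) < \<infinity>"
proof (intro allI impI)
  fix x0 :: 'x and M :: "'a measure" and X sig
  assume "ctmc_model \<Gamma> x0 M X sig"
  with assms(2) interpret ctmc \<Gamma> x0 M X sig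
    by unfold_locales
  define b where "b = Sup (range f)"
  define h where "h y = recip_primitive g (f y)" for y
  have f_le_b: "f y \<le> b" for y
    unfolding b_def using assms(6) by (intro cSup_upper) auto
  have fin: "(\<integral>\<^sup>+y\<in>{0<..b}. ennreal (1 / g y) \<partial>lborel) < \<infinity>"
    using assms(9) unfolding b_def .
  have h_nonneg: "0 \<le> h y" for y
    unfolding h_def recip_primitive_def by simp
  have "(\<integral>\<^sup>+y. ennreal (jumpP \<Gamma> x y) * ennreal (h y) \<partial>count_space UNIV) + ennreal (1 / rate \<Gamma> x)
          \<le> ennreal (h x)" for x
  proof (rule jump_drift_le[OF assms(2,4) h_nonneg])
    show "h y \<le> recip_primitive g b" for y
      unfolding h_def using fin f_le_b by (rule recip_primitive_le)
    show "h y - h x \<le> (f y - f x) / g (f x)" for y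
      unfolding h_def using recip_primitive_diff_le[OF assms(7,8) fin] assms(5) f_le_b by simp
  qed (use assms(5,8,10) in auto)
  then have "(\<integral>\<^sup>+\<omega>. explosion_time sig \<omega> \<partial>M) \<le> ennreal (h x0)"
    by (rule nn_integral_explosion_time_le[OF h_nonneg])
  then show "(\<integral>\<^sup>+\<omega>. explosion_time sig \<omega> \<partial>M) < \<infinity>"
    by (simp add: le_less_trans)
qed

end
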